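(* Let $A \in \mathbb{R}^{m\times n}$ have rank $r \ge 1$ with condition number $\kappa_2(A) = \|A\|_2/\sigma_r$, $\sigma_r$ its smallest nonzero singular value. Let $\bar{b} \in \mathcal{R}(A)$, $\bar b\neq 0$ (i.e. $\bar{b}|_{\mathcal{R}(A)^\perp} = 0$), let $E_2 \in \mathbb{R}^{m\times n}$ and $\delta b \in \mathbb{R}^m$ be perturbations, and set $\tilde{A} = A$, $\tilde{B} = A^{\mathsf{T}} + E_2^{\mathsf{T}}$, $b = \bar{b} + \delta b$. Let $x_{\min} = A^{\dagger}\bar{b}$ and define $\delta x_{\min}$ by $x_{\min} + \delta x_{\min} = (\tilde{B}\tilde{A})^{\dagger}\tilde{B}\, b$. Assume $\tilde{B}$ is an acute perturbation of $A^{\mathsf{T}}$, i.e. $\| P_{\mathcal{R}(\tilde{B})} - P_{\mathcal{R}(A^{\mathsf{T}})} \|_2 < 1$ and $\| P_{\mathcal{R}(\tilde{B}^{\mathsf{T}})} - P_{\mathcal{R}(A)} \|_2 < 1$. Then, to first order in the perturbations $(E_2, \delta b)$ (neglecting terms of second and higher order), \[ \frac{\| \delta x_{\min} \|_2}{\| x_{\min} \|_2} \leq \kappa_2(A) \frac{\| \delta b|_{\mathcal{R}(A)} \|_2}{\| \bar{b} \|_2}. \]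
   Context: $\mathcal{R}(\cdot)$ denotes the range of a matrix, $P_{\mathcal{S}}$ the orthogonal projection onto a subspace $\mathcal{S}$, $v|_{\mathcal{S}}$ the orthogonal projection of a vector $v$ onto $\mathcal{S}$, and $\dagger$ the Moore–Penrose pseudoinverse. *)

theory Defs
  imports "HOL-Analysis.Analysis"
begin

definition mat_norm2 :: "real^'n^'m \<Rightarrow> real" where
  "mat_norm2 M = onorm (\<lambda>x. M *v x)"

definition mat_range :: "real^'n^'m \<Rightarrow> (real^'m) set" where
  "mat_range M = range (\<lambda>x. M *v x)"

definition pinv :: "real^'n^'m \<Rightarrow> real^'m^'n" where
  "pinv M = (THE X. M ** X ** M = M \<and> X ** M ** X = X \<and>
                    transpose (M ** X) = M ** X \<and> transpose (X ** M) = X ** M)"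

definition orth_proj :: "(real^'m) set \<Rightarrow> real^'m^'m" where
  "orth_proj S = (THE P. \<forall>x. P *v x \<in> S \<and> (\<forall>y\<in>S. (x - P *v x) \<bullet> y = 0))"

definition nonzero_singular_values :: "real^'n^'m \<Rightarrow> real set" where
  "nonzero_singular_values M =
     {sqrt e | e. e > 0 \<and> (\<exists>v. v \<noteq> 0 \<and> (transpose M ** M) *v v = e *\<^sub>R v)}"

definition sigma_min_nz :: "real^'n^'m \<Rightarrow> real" where
  "sigma_min_nz M = Min (nonzero_singular_values M)"

definition cond2 :: "real^'n^'m \<Rightarrow> real" where
  "cond2 M = mat_norm2 M / sigma_min_nz M"

end

theory Submission
  imports Defs
begin

(* Split db = p + r with p the orthogonal projection of db onto R(A), so that A^T r = 0 and
   Bt r = E2^T r. For ||E2|| <= sigma_r / 2 the perturbed normal matrix M = Bt A is bounded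
   below by sigma_r^2 / 2 on the orthogonal complement of N(A); hence N(M) = N(A) and
   M^+ Bt c = A^+ c for every c in R(A). Therefore dx = A^+ p + M^+ E2^T r: the first term has
   norm at most |p| / sigma_r, the second at most 2 ||E2|| |db| / sigma_r^2, which is of second
   order. Dividing by |x_min| >= |bbar| / ||A|| gives the bound.
   M^+ y is handled as the minimum-norm least-squares solution of M u = y, and sigma_r as the
   square root of the minimum of |A y|^2 / |y|^2 over the orthogonal complement of N(A). *)

lemma inner_matrix_vector_transpose:
  fixes A :: "real^'n^'m"
  shows "(A *v x) \<bullet> y = x \<bullet> (transpose A *v y)"
  by (metis dot_lmul_matrix inner_commute transpose_matrix_vector)

lemma subspace_mat_range: "subspace (mat_range M)"
  unfolding mat_range_def by (simp add: linear_subspace_image)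

definition ker_perp :: "real^'n^'m \<Rightarrow> (real^'n) set" where
  "ker_perp M = {y. \<forall>k. M *v k = 0 \<longrightarrow> y \<bullet> k = 0}"

lemma subspace_ker_perp: "subspace (ker_perp M)"
  unfolding ker_perp_def subspace_def by (auto simp: inner_add_left)

lemma ex1_matrix_of_linear_relation:
  fixes R :: "real^'n \<Rightarrow> real^'m \<Rightarrow> bool"
  assumes ex1: "\<And>x. \<exists>!u. R x u"
    and add: "\<And>x y u v. R x u \<Longrightarrow> R y v \<Longrightarrow> R (x + y) (u + v)"
    and scale: "\<And>c x u. R x u \<Longrightarrow> R (c *\<^sub>R x) (c *\<^sub>R u)"
  shows "\<exists>!P. \<forall>x. R x (P *v x)"
proof -
  define g where "g x = (THE u. R x u)" for x
  have g: "R x (g x)" for x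
    unfolding g_def using ex1 by (rule theI')
  have g_unique: "u = g x" if "R x u" for x u
    using ex1 g that by blast
  have "linear g"
  proof (rule linearI)
    show "g (x + y) = g x + g y" for x y
      using add[OF g g] by (rule g_unique[symmetric])
    show "g (c *\<^sub>R x) = c *\<^sub>R g x" for c x
      using scale[OF g] by (rule g_unique[symmetric])
  qed
  then have matrix_g: "matrix g *v x = g x" for x
    by (metis matrix_vector_mul(2))
  show ?thesis
  proof (rule ex1I[of _ "matrix g"])
    show "\<forall>x. R x (matrix g *v x)"
      by (simp add: matrix_g g)
    show "P = matrix g" if "\<forall>x. R x (P *v x)" for P
      using that by (simp add: matrix_eq matrix_g g_unique)
  qed
qed

section \<open>Orthogonal projections\<close>

lemma orthogonal_decomp_ex1:
  fixes S :: "(real^'m) set"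
  assumes "subspace S"
  shows "\<exists>!p. p \<in> S \<and> (\<forall>y\<in>S. (x - p) \<bullet> y = 0)"
proof -
  obtain p z where decomp: "p \<in> span S" "\<And>w. w \<in> span S \<Longrightarrow> orthogonal z w" "x = p + z"
    using orthogonal_subspace_decomp_exists[of S x] by blast
  show ?thesis
  proof (rule ex1I[of _ p])
    show p: "p \<in> S \<and> (\<forall>y\<in>S. (x - p) \<bullet> y = 0)"
      using decomp assms by (auto simp: orthogonal_def span_base) (metis span_eq_iff)
    fix q assume q: "q \<in> S \<and> (\<forall>y\<in>S. (x - q) \<bullet> y = 0)"
    with p assms have "p - q \<in> S"
      by (simp add: subspace_diff)
    with p q have "(x - q) \<bullet> (p - q) = 0" "(x - p) \<bullet> (p - q) = 0"
      by auto
    then have "(p - q) \<bullet> (p - q) = 0"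
      by (simp add: inner_diff_left inner_diff_right)
    then show "q = p"
      by simp
  qed
qed

lemma orth_proj:
  fixes S :: "(real^'m) set"
  assumes "subspace S"
  shows "orth_proj S *v x \<in> S" and "y \<in> S \<Longrightarrow> (x - orth_proj S *v x) \<bullet> y = 0"
proof -
  let ?R = "\<lambda>x p. p \<in> S \<and> (\<forall>y\<in>S. (x - p) \<bullet> y = 0)"
  have "\<exists>!P. \<forall>x. ?R x (P *v x)"
  proof (rule ex1_matrix_of_linear_relation[of ?R])
    show "\<exists>!p. ?R x p" for x
      by (rule orthogonal_decomp_ex1[OF assms])
    show "?R (x + y) (u + v)" if "?R x u" "?R y v" for x y u v
      using that assms by (simp add: subspace_add inner_diff_left inner_add_left)
    show "?R (c *\<^sub>R x) (c *\<^sub>R u)" if "?R x u" for c x u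
      using that assms by (simp add: subspace_scale inner_diff_left)
  qed
  from theI'[OF this] show "orth_proj S *v x \<in> S" "y \<in> S \<Longrightarrow> (x - orth_proj S *v x) \<bullet> y = 0"
    unfolding orth_proj_def by blast+
qed

lemma orth_proj_mat_range:
  fixes A :: "real^'n^'m" and x :: "real^'m"
  defines "p \<equiv> orth_proj (mat_range A) *v x"
  shows "p \<in> mat_range A" and "transpose A *v (x - p) = 0" and "norm (x - p) \<le> norm x"
proof -
  show p_range: "p \<in> mat_range A"
    unfolding p_def by (rule orth_proj(1)[OF subspace_mat_range])
  have residual: "(x - p) \<bullet> (A *v z) = 0" for z
    unfolding p_def by (rule orth_proj(2)[OF subspace_mat_range]) (simp add: mat_range_def)
  have "(transpose A *v (x - p)) \<bullet> (transpose A *v (x - p)) = 0"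
    using residual[of "transpose A *v (x - p)"] by (metis inner_commute inner_matrix_vector_transpose)
  then show "transpose A *v (x - p) = 0"
    by simp
  from p_range obtain z where "p = A *v z"
    unfolding mat_range_def by blast
  with residual have "orthogonal p (x - p)"
    by (simp add: orthogonal_def inner_commute)
  then have "(norm (p + (x - p)))\<^sup>2 = (norm p)\<^sup>2 + (norm (x - p))\<^sup>2"
    by (rule norm_add_Pythagorean)
  then show "norm (x - p) \<le> norm x"
    by (simp add: power2_le_imp_le)
qed

section \<open>Moore-Penrose pseudoinverse\<close>

definition penrose :: "real^'n^'m \<Rightarrow> real^'m^'n \<Rightarrow> bool" where
  "penrose M X \<longleftrightarrow> M ** X ** M = M \<and> X ** M ** X = X \<and>
                   transpose (M ** X) = M ** X \<and> transpose (X ** M) = X ** M"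

definition min_norm_lsq :: "real^'n^'m \<Rightarrow> real^'m \<Rightarrow> real^'n \<Rightarrow> bool" where
  "min_norm_lsq M y u \<longleftrightarrow> u \<in> ker_perp M \<and> (\<forall>x. (M *v u - y) \<bullet> (M *v x) = 0)"

lemma min_norm_lsq_unique:
  assumes u: "min_norm_lsq M y u" and v: "min_norm_lsq M y v"
  shows "u = v"
proof -
  have "(M *v u - y) \<bullet> (M *v (u - v)) = 0" "(M *v v - y) \<bullet> (M *v (u - v)) = 0"
    using u v unfolding min_norm_lsq_def by blast+
  then have "(M *v (u - v)) \<bullet> (M *v (u - v)) = 0"
    by (simp add: matrix_vector_mult_diff_distrib inner_diff_left)
  then have "M *v (u - v) = 0"
    by simp
  with u v have "u \<bullet> (u - v) = 0" "v \<bullet> (u - v) = 0"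
    unfolding min_norm_lsq_def ker_perp_def by blast+
  then have "(u - v) \<bullet> (u - v) = 0"
    by (simp add: inner_diff_left)
  then show "u = v"
    by simp
qed

lemma min_norm_lsq_exists: "\<exists>u. min_norm_lsq M y u"
proof -
  obtain p where p: "p \<in> mat_range M" "\<forall>z\<in>mat_range M. (y - p) \<bullet> z = 0"
    using orthogonal_decomp_ex1[OF subspace_mat_range, of M y] by blast
  then obtain w where w: "p = M *v w"
    unfolding mat_range_def by blast
  have "subspace {k. M *v k = 0}"
    by (simp add: linear_subspace_kernel)
  then obtain q where q: "M *v q = 0" "\<forall>k. M *v k = 0 \<longrightarrow> (w - q) \<bullet> k = 0"
    using orthogonal_decomp_ex1[of "{k. M *v k = 0}" w] by blast
  have "min_norm_lsq M y (w - q)"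
    unfolding min_norm_lsq_def ker_perp_def
  proof (intro conjI allI CollectI)
    show "M *v k = 0 \<longrightarrow> (w - q) \<bullet> k = 0" for k
      using q(2) by blast
    have "M *v (w - q) = p"
      using q(1) w by (simp add: matrix_vector_mult_diff_distrib)
    then show "(M *v (w - q) - y) \<bullet> (M *v x) = 0" for x
      using p(2) by (auto simp: mat_range_def inner_diff_left)
  qed
  then show ?thesis ..
qed

lemma min_norm_lsq_ex1: "\<exists>!u. min_norm_lsq M y u"
  using min_norm_lsq_exists min_norm_lsq_unique by blast

lemma min_norm_lsq_of_ker_perp: "v \<in> ker_perp M \<Longrightarrow> min_norm_lsq M (M *v v) v"
  by (simp add: min_norm_lsq_def)

lemma transpose_eq_if_self_adjoint:
  fixes B :: "real^'n^'n"
  assumes "\<And>x y. (B *v x) \<bullet> y = x \<bullet> (B *v y)"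
  shows "transpose B = B"
proof -
  have "x \<bullet> (transpose B *v y - B *v y) = 0" for x y
    using assms[of x y] inner_matrix_vector_transpose[of B x y] by (simp add: inner_diff_right)
  then have "transpose B *v y = B *v y" for y
    by (metis inner_eq_zero_iff right_minus_eq)
  then show ?thesis
    by (simp add: matrix_eq)
qed

lemma penrose_imp_min_norm_lsq:
  assumes "penrose M X"
  shows "min_norm_lsq M y (X *v y)"
proof -
  have MXM: "M *v (X *v (M *v x)) = M *v x" and XMX: "X *v (M *v (X *v z)) = X *v z" for x z
    using assms unfolding penrose_def by (metis matrix_vector_mul_assoc)+
  have MX_sym: "(M *v (X *v a)) \<bullet> b = a \<bullet> (M *v (X *v b))"
   and XM_sym: "(X *v (M *v a')) \<bullet> b' = a' \<bullet> (X *v (M *v b'))" for a b a' b'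
    using inner_matrix_vector_transpose[of "M ** X" a b] inner_matrix_vector_transpose[of "X ** M" a' b'] assms
    unfolding penrose_def by (simp_all add: matrix_vector_mul_assoc)
  show ?thesis
    unfolding min_norm_lsq_def ker_perp_def
  proof (intro conjI allI impI CollectI)
    fix k assume "M *v k = 0"
    have "(X *v y) \<bullet> k = (X *v (M *v (X *v y))) \<bullet> k"
      by (simp add: XMX)
    also have "\<dots> = (X *v y) \<bullet> (X *v (M *v k))"
      by (rule XM_sym)
    finally show "(X *v y) \<bullet> k = 0"
      using \<open>M *v k = 0\<close> by simp
  next
    fix x
    have "(M *v (X *v y) - y) \<bullet> (M *v x) = (M *v (X *v y) - y) \<bullet> (M *v (X *v (M *v x)))"
      by (simp add: MXM)
    also have "\<dots> = (M *v (X *v (M *v (X *v y) - y))) \<bullet> (M *v x)"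
      using MX_sym by (metis inner_commute)
    also have "\<dots> = 0"
      by (simp add: MXM matrix_vector_mult_diff_distrib)
    finally show "(M *v (X *v y) - y) \<bullet> (M *v x) = 0" .
  qed
qed

lemma min_norm_lsq_imp_penrose:
  assumes lsq: "\<And>y. min_norm_lsq M y (X *v y)"
  shows "penrose M X"
proof -
  have MXM: "M *v (X *v (M *v x)) = M *v x" for x
  proof -
    have "(M *v (X *v (M *v x)) - M *v x) \<bullet> (M *v (X *v (M *v x) - x)) = 0"
      using lsq unfolding min_norm_lsq_def by blast
    then have "M *v (X *v (M *v x) - x) = 0"
      by (simp add: matrix_vector_mult_diff_distrib)
    then show ?thesis
      by (simp add: matrix_vector_mult_diff_distrib)
  qed
  have XMX: "X *v (M *v (X *v y)) = X *v y" for y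
    using lsq min_norm_lsq_of_ker_perp min_norm_lsq_unique
    unfolding min_norm_lsq_def by blast
  text \<open>Both products act as orthogonal projections, onto the range of M and onto
    the orthogonal complement of its kernel, hence are self-adjoint.\<close>
  have MX_proj: "(M *v (X *v y)) \<bullet> y' = (M *v (X *v y)) \<bullet> (M *v (X *v y'))" for y y'
  proof -
    have "(M *v (X *v y)) \<bullet> (M *v (X *v y') - y') = 0"
      using lsq unfolding min_norm_lsq_def by (metis inner_commute)
    then show ?thesis
      by (simp add: inner_diff_right)
  qed
  have XM_proj: "(X *v (M *v x)) \<bullet> x' = (X *v (M *v x)) \<bullet> (X *v (M *v x'))" for x x'
  proof -
    have "M *v (x' - X *v (M *v x')) = 0"
      by (simp add: MXM matrix_vector_mult_diff_distrib)
    then have "(X *v (M *v x)) \<bullet> (x' - X *v (M *v x')) = 0"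
      using lsq unfolding min_norm_lsq_def ker_perp_def by blast
    then show ?thesis
      by (simp add: inner_diff_right)
  qed
  have MX_sym: "(M *v (X *v y)) \<bullet> y' = y \<bullet> (M *v (X *v y'))" for y y'
    using MX_proj[of y y'] MX_proj[of y' y] by (metis inner_commute)
  have XM_sym: "(X *v (M *v x)) \<bullet> x' = x \<bullet> (X *v (M *v x'))" for x x'
    using XM_proj[of x x'] XM_proj[of x' x] by (metis inner_commute)
  have "transpose (M ** X) = M ** X"
    by (rule transpose_eq_if_self_adjoint) (metis MX_sym matrix_vector_mul_assoc)
  moreover have "transpose (X ** M) = X ** M"
    by (rule transpose_eq_if_self_adjoint) (metis XM_sym matrix_vector_mul_assoc)
  ultimately show ?thesis
    unfolding penrose_def by (simp add: matrix_eq MXM XMX matrix_vector_mul_assoc[symmetric])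
qed

lemma penrose_iff_min_norm_lsq: "penrose M X \<longleftrightarrow> (\<forall>y. min_norm_lsq M y (X *v y))"
  using penrose_imp_min_norm_lsq min_norm_lsq_imp_penrose by blast

lemma penrose_pinv: "penrose M (pinv M)"
proof -
  have "\<exists>!X. \<forall>y. min_norm_lsq M y (X *v y)"
  proof (rule ex1_matrix_of_linear_relation)
    show "\<exists>!u. min_norm_lsq M y u" for y
      by (rule min_norm_lsq_ex1)
    show "min_norm_lsq M (x + y) (u + v)" if "min_norm_lsq M x u" "min_norm_lsq M y v" for x y u v
      using that subspace_ker_perp[of M]
      by (simp add: min_norm_lsq_def subspace_add matrix_vector_right_distrib inner_add_left algebra_simps)
    show "min_norm_lsq M (c *\<^sub>R x) (c *\<^sub>R u)" if "min_norm_lsq M x u" for c x u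
      using that subspace_ker_perp[of M]
      by (simp add: min_norm_lsq_def subspace_scale matrix_vector_mult_scaleR inner_diff_left algebra_simps)
  qed
  then have "\<exists>!X. penrose M X"
    by (simp add: penrose_iff_min_norm_lsq)
  from theI'[OF this] show ?thesis
    unfolding pinv_def penrose_def .
qed

lemma min_norm_lsq_pinv: "min_norm_lsq M y (pinv M *v y)"
  using penrose_pinv penrose_iff_min_norm_lsq by blast

lemma pinv_in_ker_perp: "pinv M *v y \<in> ker_perp M"
  using min_norm_lsq_pinv unfolding min_norm_lsq_def by blast

lemma matrix_pinv_matrix: "M *v (pinv M *v (M *v x)) = M *v x"
  using penrose_pinv[of M] unfolding penrose_def by (metis matrix_vector_mul_assoc)

lemma pinv_matrix_cancel: "v \<in> ker_perp M \<Longrightarrow> pinv M *v (M *v v) = v"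
  using min_norm_lsq_pinv min_norm_lsq_of_ker_perp min_norm_lsq_unique by blast

lemma norm_pinv_le:
  assumes "c > 0" and bounded_below: "\<And>y. y \<in> ker_perp M \<Longrightarrow> c * norm y \<le> norm (M *v y)"
  shows "c * norm (pinv M *v y) \<le> norm y"
proof -
  let ?x = "pinv M *v y"
  have "(M *v ?x - y) \<bullet> (M *v ?x) = 0"
    using min_norm_lsq_pinv unfolding min_norm_lsq_def by blast
  then have "(norm (M *v ?x))\<^sup>2 = y \<bullet> (M *v ?x)"
    by (simp add: inner_diff_left power2_norm_eq_inner)
  also have "\<dots> \<le> norm y * norm (M *v ?x)"
    by (rule norm_cauchy_schwarz)
  finally have "norm (M *v ?x) \<le> norm y"
    by (simp add: power2_eq_square mult_le_cancel_right) (metis norm_zero norm_ge_zero)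
  moreover have "c * norm ?x \<le> norm (M *v ?x)"
    by (rule bounded_below[OF pinv_in_ker_perp])
  ultimately show ?thesis
    by linarith
qed

section \<open>Smallest nonzero singular value\<close>

lemma nonzero_singular_values_finite: "finite (nonzero_singular_values A)"
proof -
  define G where "G = transpose A ** A"
  have G_inner: "(G *v x) \<bullet> y = (A *v x) \<bullet> (A *v y)" for x y
    unfolding G_def by (metis matrix_vector_mul_assoc inner_matrix_vector_transpose inner_commute)
  define E where "E = {e. e > 0 \<and> (\<exists>v. v \<noteq> 0 \<and> G *v v = e *\<^sub>R v)}"
  define ev where "ev e = (SOME v. v \<noteq> 0 \<and> G *v v = e *\<^sub>R v)" for e
  have ev: "ev e \<noteq> 0" "G *v ev e = e *\<^sub>R ev e" if "e \<in> E" for e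
    using someI_ex[of "\<lambda>v. v \<noteq> 0 \<and> G *v v = e *\<^sub>R v"] that unfolding E_def ev_def by auto
  have "inj_on ev E"
    by (rule inj_onI) (metis ev scaleR_right_imp_eq)
  have "pairwise orthogonal (ev ` E)"
  proof (clarsimp simp: pairwise_def orthogonal_def)
    fix e e' assume e: "e \<in> E" "e' \<in> E" and "ev e \<noteq> ev e'"
    then have "e \<noteq> e'"
      by auto
    have "e * (ev e \<bullet> ev e') = (G *v ev e) \<bullet> ev e'"
      using ev(2)[OF e(1)] by simp
    also have "\<dots> = (G *v ev e') \<bullet> ev e"
      by (metis G_inner inner_commute)
    also have "\<dots> = e' * (ev e \<bullet> ev e')"
      using ev(2)[OF e(2)] by (simp add: inner_commute)
    finally show "ev e \<bullet> ev e' = 0"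
      using \<open>e \<noteq> e'\<close> by simp
  qed
  moreover have "0 \<notin> ev ` E"
    using ev(1) by auto
  ultimately have "finite (ev ` E)"
    using pairwise_orthogonal_independent independent_bound by blast
  then have "finite E"
    using \<open>inj_on ev E\<close> by (rule finite_imageD)
  moreover have "nonzero_singular_values A = sqrt ` E"
    unfolding nonzero_singular_values_def E_def G_def by auto
  ultimately show ?thesis
    by simp
qed

lemma linear_coeff_eq_0_if_quadratic_nonneg:
  fixes p q :: real
  assumes "\<And>t. 0 \<le> t * p + t\<^sup>2 * q"
  shows "p = 0"
proof (rule ccontr)
  assume "p \<noteq> 0"
  define a where "a = \<bar>q\<bar> + 1"
  have "a > 0" "q < a"
    unfolding a_def by auto
  define t where "t = - p / a"
  have "t * p + t\<^sup>2 * q = p\<^sup>2 * (q - a) / a\<^sup>2"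
    unfolding t_def using \<open>a > 0\<close> by (simp add: field_simps power2_eq_square)
  also have "\<dots> < 0"
    using \<open>p \<noteq> 0\<close> \<open>a > 0\<close> \<open>q < a\<close> by (simp add: divide_neg_pos mult_pos_neg)
  finally show False
    using assms[of t] by simp
qed

lemma power2_norm_add_scaleR:
  fixes a b :: "'a::real_inner"
  shows "(norm (a + t *\<^sub>R b))\<^sup>2 = (norm a)\<^sup>2 + 2 * t * (a \<bullet> b) + t\<^sup>2 * (norm b)\<^sup>2"
  by (simp only: power2_norm_eq_inner)
    (simp add: inner_add_left inner_add_right inner_commute power2_eq_square algebra_simps)

lemma rayleigh_minimizer_exists:
  fixes A :: "real^'n^'m"
  assumes "A *v y1 \<noteq> 0"
  obtains y0 where "y0 \<in> ker_perp A" "norm y0 = 1"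
    "\<And>y. y \<in> ker_perp A \<Longrightarrow> (norm (A *v y0))\<^sup>2 * (norm y)\<^sup>2 \<le> (norm (A *v y))\<^sup>2"
proof -
  define K where "K = ker_perp A \<inter> sphere 0 1"
  have "compact K"
    unfolding K_def by (intro closed_Int_compact closed_subspace subspace_ker_perp compact_sphere)
  define y2 where "y2 = pinv A *v (A *v y1)"
  have "y2 \<in> ker_perp A" "y2 \<noteq> 0"
    using pinv_in_ker_perp matrix_pinv_matrix[of A y1] assms unfolding y2_def by auto
  then have "y2 /\<^sub>R norm y2 \<in> K"
    unfolding K_def by (simp add: subspace_scale subspace_ker_perp)
  then have "K \<noteq> {}"
    by blast
  moreover have "continuous_on K (\<lambda>y. (norm (A *v y))\<^sup>2)"
    by (intro continuous_intros linear_continuous_on matrix_vector_mul_bounded_linear)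
  ultimately obtain y0 where y0: "y0 \<in> K" "\<And>y. y \<in> K \<Longrightarrow> (norm (A *v y0))\<^sup>2 \<le> (norm (A *v y))\<^sup>2"
    using continuous_attains_inf[OF \<open>compact K\<close>] by blast
  show ?thesis
  proof
    show "y0 \<in> ker_perp A" "norm y0 = 1"
      using y0(1) unfolding K_def by auto
    fix y assume y: "y \<in> ker_perp A"
    show "(norm (A *v y0))\<^sup>2 * (norm y)\<^sup>2 \<le> (norm (A *v y))\<^sup>2"
    proof (cases "y = 0")
      case False
      with y have "y /\<^sub>R norm y \<in> K"
        unfolding K_def by (simp add: subspace_scale subspace_ker_perp)
      then have "(norm (A *v y0))\<^sup>2 \<le> (norm (A *v (y /\<^sub>R norm y)))\<^sup>2"
        by (rule y0(2))
      also have "\<dots> = (norm (A *v y))\<^sup>2 / (norm y)\<^sup>2"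
        by (simp add: matrix_vector_mult_scaleR power_mult_distrib divide_inverse power_inverse
            mult.commute)
      finally show ?thesis
        using False by (simp add: field_simps)
    qed simp
  qed
qed

lemma rayleigh_minimizer_eigenvector:
  fixes A :: "real^'n^'m" and y0 :: "real^'n"
  defines "\<mu> \<equiv> (norm (A *v y0))\<^sup>2"
  assumes y0: "y0 \<in> ker_perp A" "norm y0 = 1"
    and min: "\<And>y. y \<in> ker_perp A \<Longrightarrow> \<mu> * (norm y)\<^sup>2 \<le> (norm (A *v y))\<^sup>2"
  shows "(transpose A ** A) *v y0 = \<mu> *\<^sub>R y0"
proof -
  define v where "v = transpose A *v (A *v y0) - \<mu> *\<^sub>R y0"
  have v_inner: "v \<bullet> w = (A *v y0) \<bullet> (A *v w) - \<mu> * (y0 \<bullet> w)" for w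
  proof -
    have "(transpose A *v (A *v y0)) \<bullet> w = (A *v y0) \<bullet> (A *v w)"
      by (metis inner_commute inner_matrix_vector_transpose)
    then show ?thesis
      by (simp add: v_def inner_diff_left del: transpose_matrix_vector)
  qed
  text \<open>First-order condition: the Rayleigh quotient is stationary at y0 along every w.\<close>
  have "v \<bullet> w = 0" if w: "w \<in> ker_perp A" for w
  proof -
    have "0 \<le> t * (2 * ((A *v y0) \<bullet> (A *v w)) - 2 * \<mu> * (y0 \<bullet> w))
              + t\<^sup>2 * ((norm (A *v w))\<^sup>2 - \<mu> * (norm w)\<^sup>2)" for t
    proof -
      have "y0 + t *\<^sub>R w \<in> ker_perp A"
        using y0 w subspace_ker_perp[of A] by (simp add: subspace_add subspace_scale)
      then have "\<mu> * (norm (y0 + t *\<^sub>R w))\<^sup>2 \<le> (norm (A *v y0 + t *\<^sub>R (A *v w)))\<^sup>2"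
        using min[of "y0 + t *\<^sub>R w"] by (simp add: matrix_vector_right_distrib matrix_vector_mult_scaleR)
      then have "\<mu> * (1 + 2 * t * (y0 \<bullet> w) + t\<^sup>2 * (norm w)\<^sup>2)
                 \<le> \<mu> + 2 * t * ((A *v y0) \<bullet> (A *v w)) + t\<^sup>2 * (norm (A *v w))\<^sup>2"
        unfolding power2_norm_add_scaleR using y0(2) by (simp add: \<mu>_def)
      then show ?thesis
        by (simp add: algebra_simps)
    qed
    then have "2 * ((A *v y0) \<bullet> (A *v w)) - 2 * \<mu> * (y0 \<bullet> w) = 0"
      by (rule linear_coeff_eq_0_if_quadratic_nonneg)
    then show ?thesis
      by (simp add: v_inner)
  qed
  moreover have "v \<in> ker_perp A"
  proof -
    have "(transpose A *v (A *v y0)) \<bullet> k = (A *v y0) \<bullet> (A *v k)" for k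
      by (metis inner_commute inner_matrix_vector_transpose)
    then have "transpose A *v (A *v y0) \<in> ker_perp A"
      unfolding ker_perp_def by (simp del: transpose_matrix_vector)
    then show ?thesis
      unfolding v_def using y0(1) subspace_ker_perp[of A] by (simp add: subspace_diff subspace_scale)
  qed
  ultimately have "v = 0"
    by (metis inner_eq_zero_iff)
  then show ?thesis
    unfolding v_def by (simp add: matrix_vector_mul_assoc[symmetric] del: transpose_matrix_vector)
qed

lemma nonzero_singular_value_bounded_below:
  fixes A :: "real^'n^'m"
  assumes "A *v y1 \<noteq> 0"
  obtains s where "s \<in> nonzero_singular_values A"
    "\<And>y. y \<in> ker_perp A \<Longrightarrow> s * norm y \<le> norm (A *v y)"
proof -
  obtain y0 where y0: "y0 \<in> ker_perp A" "norm y0 = 1"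
    and min: "\<And>y. y \<in> ker_perp A \<Longrightarrow> (norm (A *v y0))\<^sup>2 * (norm y)\<^sup>2 \<le> (norm (A *v y))\<^sup>2"
    using rayleigh_minimizer_exists[OF assms] by blast
  define \<mu> where "\<mu> = (norm (A *v y0))\<^sup>2"
  have "A *v y0 \<noteq> 0"
  proof
    assume "A *v y0 = 0"
    with y0(1) have "y0 \<bullet> y0 = 0"
      unfolding ker_perp_def by blast
    with y0(2) show False
      by simp
  qed
  then have "\<mu> > 0"
    unfolding \<mu>_def by simp
  moreover have "(transpose A ** A) *v y0 = \<mu> *\<^sub>R y0"
    unfolding \<mu>_def using y0 min by (rule rayleigh_minimizer_eigenvector)
  moreover have "y0 \<noteq> 0"
    using y0(2) by auto
  ultimately have "sqrt \<mu> \<in> nonzero_singular_values A"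
    unfolding nonzero_singular_values_def by blast
  moreover have "sqrt \<mu> * norm y \<le> norm (A *v y)" if "y \<in> ker_perp A" for y
    using real_sqrt_le_mono[OF min[OF that]] by (simp add: real_sqrt_mult \<mu>_def)
  ultimately show ?thesis
    by (rule that)
qed

lemma
  fixes A :: "real^'n^'m"
  assumes "A *v y1 \<noteq> 0"
  shows sigma_min_nz_pos: "0 < sigma_min_nz A"
    and sigma_min_nz_le_norm: "y \<in> ker_perp A \<Longrightarrow> sigma_min_nz A * norm y \<le> norm (A *v y)"
proof -
  obtain s where s: "s \<in> nonzero_singular_values A"
    and s_le: "\<And>y. y \<in> ker_perp A \<Longrightarrow> s * norm y \<le> norm (A *v y)"
    using nonzero_singular_value_bounded_below[OF assms] by blast
  have "sigma_min_nz A \<in> nonzero_singular_values A"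
    unfolding sigma_min_nz_def using s nonzero_singular_values_finite by (intro Min_in) auto
  then show "0 < sigma_min_nz A"
    unfolding nonzero_singular_values_def by auto
  have "sigma_min_nz A \<le> s"
    unfolding sigma_min_nz_def by (rule Min_le[OF nonzero_singular_values_finite s])
  then show "sigma_min_nz A * norm y \<le> norm (A *v y)" if "y \<in> ker_perp A"
    using s_le[OF that] by (meson mult_right_mono norm_ge_zero order_trans)
qed

section \<open>Perturbed normal equations\<close>

lemma norm_mat_norm2_le: "norm (M *v x) \<le> mat_norm2 M * norm x"
  unfolding mat_norm2_def by (rule onorm) simp

lemma mat_norm2_nonneg: "0 \<le> mat_norm2 M"
  unfolding mat_norm2_def by (rule onorm_pos_le) simp

lemma norm_transpose_mat_norm2_le: "norm (transpose M *v x) \<le> mat_norm2 M * norm x"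
proof -
  let ?z = "transpose M *v x"
  have "(norm ?z)\<^sup>2 = (M *v ?z) \<bullet> x"
    by (simp add: inner_matrix_vector_transpose power2_norm_eq_inner del: transpose_matrix_vector)
  also have "\<dots> \<le> norm (M *v ?z) * norm x"
    by (rule norm_cauchy_schwarz)
  also have "\<dots> \<le> mat_norm2 M * norm ?z * norm x"
    by (simp add: mult_right_mono norm_mat_norm2_le)
  finally have "norm ?z * norm ?z \<le> (mat_norm2 M * norm x) * norm ?z"
    by (simp add: power2_eq_square algebra_simps)
  then show ?thesis
    using mat_norm2_nonneg[of M] by (cases "?z = 0") (simp_all add: mult_le_cancel_right)
qed

lemma perturbed_normal_matrix_bounded_below:
  fixes A E :: "real^'n^'m"
  assumes "0 \<le> \<sigma>" and A_below: "\<And>y. y \<in> ker_perp A \<Longrightarrow> \<sigma> * norm y \<le> norm (A *v y)"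
    and E_small: "mat_norm2 E \<le> \<sigma> / 2" and y: "y \<in> ker_perp A"
  shows "\<sigma>\<^sup>2 / 2 * norm y \<le> norm (((transpose A + transpose E) ** A) *v y)"
proof -
  let ?M = "(transpose A + transpose E) ** A"
  define t where "t = norm (A *v y)"
  define s where "s = \<sigma> * norm y"
  have "0 \<le> s" "s \<le> t"
    using \<open>0 \<le> \<sigma>\<close> A_below[OF y] unfolding s_def t_def by simp_all
  have M_expand: "?M *v y = transpose A *v (A *v y) + transpose E *v (A *v y)"
    by (simp add: matrix_vector_mul_assoc[symmetric] matrix_vector_mult_add_rdistrib
        del: transpose_matrix_vector)
  have M_inner: "(?M *v y) \<bullet> y = t\<^sup>2 + (A *v y) \<bullet> (E *v y)"
    unfolding M_expand inner_add_left t_def power2_norm_eq_inner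
    by (metis inner_commute inner_matrix_vector_transpose)
  have "\<bar>(A *v y) \<bullet> (E *v y)\<bar> \<le> t * norm (E *v y)"
    unfolding t_def by (rule Cauchy_Schwarz_ineq2)
  also have "\<dots> \<le> t * (s / 2)"
  proof (rule mult_left_mono)
    have "mat_norm2 E * norm y \<le> \<sigma> / 2 * norm y"
      using E_small by (rule mult_right_mono) simp
    then show "norm (E *v y) \<le> s / 2"
      using norm_mat_norm2_le[of E y] unfolding s_def by simp
  qed (simp add: t_def)
  finally have cross: "\<bar>(A *v y) \<bullet> (E *v y)\<bar> \<le> t * (s / 2)" .
  have "\<sigma>\<^sup>2 / 2 * (norm y * norm y) = s * (s / 2)"
    unfolding s_def by (simp add: power2_eq_square)
  also have "\<dots> \<le> t * (t - s / 2)"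
    using \<open>0 \<le> s\<close> \<open>s \<le> t\<close> by (intro mult_mono) simp_all
  also have "\<dots> \<le> (?M *v y) \<bullet> y"
    using M_inner cross by (simp add: power2_eq_square algebra_simps)
  also have "\<dots> \<le> norm (?M *v y) * norm y"
    by (rule norm_cauchy_schwarz)
  finally show ?thesis
    by (cases "y = 0") (simp_all add: mult.assoc[symmetric] mult_le_cancel_right)
qed

lemma kernel_eq_if_bounded_below:
  fixes A :: "real^'n^'m" and B :: "real^'m^'k"
  assumes "0 < c" and BA_below: "\<And>y. y \<in> ker_perp A \<Longrightarrow> c * norm y \<le> norm ((B ** A) *v y)"
  shows "(B ** A) *v k = 0 \<longleftrightarrow> A *v k = 0"
proof
  show "(B ** A) *v k = 0" if "A *v k = 0"
    using that by (simp add: matrix_vector_mul_assoc[symmetric])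
  assume "(B ** A) *v k = 0"
  define w where "w = pinv A *v (A *v k)"
  have "A *v w = A *v k"
    unfolding w_def by (rule matrix_pinv_matrix)
  with \<open>(B ** A) *v k = 0\<close> have "(B ** A) *v w = 0"
    by (simp add: matrix_vector_mul_assoc[symmetric])
  then have "c * norm w \<le> 0"
    using BA_below[OF pinv_in_ker_perp[of A "A *v k"]] unfolding w_def by simp
  with \<open>0 < c\<close> have "w = 0"
    by (simp add: mult_le_0_iff)
  with \<open>A *v w = A *v k\<close> show "A *v k = 0"
    by simp
qed

lemma pinv_product_on_range:
  fixes A :: "real^'n^'m" and B :: "real^'m^'k"
  assumes ker: "\<And>k. (B ** A) *v k = 0 \<longleftrightarrow> A *v k = 0" and "c \<in> mat_range A"
  shows "pinv (B ** A) *v (B *v c) = pinv A *v c"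
proof -
  define v where "v = pinv A *v c"
  have "A *v v = c"
    using \<open>c \<in> mat_range A\<close> unfolding mat_range_def v_def by (auto simp: matrix_pinv_matrix)
  then have BAv: "(B ** A) *v v = B *v c"
    by (simp add: matrix_vector_mul_assoc[symmetric])
  have "v \<in> ker_perp (B ** A)"
    using pinv_in_ker_perp[of A c] unfolding ker_perp_def v_def ker by blast
  then have "pinv (B ** A) *v ((B ** A) *v v) = v"
    by (rule pinv_matrix_cancel)
  then show ?thesis
    unfolding BAv by (simp add: v_def)
qed

lemma perturbed_solution_error:
  fixes A E :: "real^'n^'m" and bbar db :: "real^'m"
  defines "Bt \<equiv> transpose A + transpose E" and "\<sigma> \<equiv> sigma_min_nz A"
    and "p \<equiv> orth_proj (mat_range A) *v db"
  assumes bbar: "bbar \<in> mat_range A" "bbar \<noteq> 0" and E_small: "mat_norm2 E \<le> \<sigma> / 2"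
  shows "norm (pinv (Bt ** A) *v (Bt *v (bbar + db)) - pinv A *v bbar)
           \<le> norm p / \<sigma> + 2 / \<sigma>\<^sup>2 * (mat_norm2 E * norm db)"
proof -
  from bbar obtain u where "A *v u \<noteq> 0"
    unfolding mat_range_def by auto
  then have "0 < \<sigma>" and A_below: "\<And>y. y \<in> ker_perp A \<Longrightarrow> \<sigma> * norm y \<le> norm (A *v y)"
    unfolding \<sigma>_def by (rule sigma_min_nz_pos, rule sigma_min_nz_le_norm)
  have M_below: "\<sigma>\<^sup>2 / 2 * norm y \<le> norm ((Bt ** A) *v y)" if "y \<in> ker_perp A" for y
    unfolding Bt_def using \<open>0 < \<sigma>\<close> A_below E_small that
    by (intro perturbed_normal_matrix_bounded_below) simp_all
  have "0 < \<sigma>\<^sup>2 / 2"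
    using \<open>0 < \<sigma>\<close> by simp
  then have ker: "(Bt ** A) *v k = 0 \<longleftrightarrow> A *v k = 0" for k
    using M_below by (rule kernel_eq_if_bounded_below)
  define r where "r = db - p"
  have "p \<in> mat_range A" "transpose A *v r = 0" "norm r \<le> norm db"
    unfolding p_def r_def by (rule orth_proj_mat_range)+
  have Bt_split: "Bt *v (bbar + db) = Bt *v (bbar + p) + transpose E *v r"
    using \<open>transpose A *v r = 0\<close> unfolding Bt_def r_def
    by (simp add: matrix_vector_mult_add_rdistrib matrix_vector_right_distrib algebra_simps
        del: transpose_matrix_vector)
  have on_range: "pinv (Bt ** A) *v (Bt *v (bbar + p)) = pinv A *v (bbar + p)"
    using ker subspace_add[OF subspace_mat_range bbar(1) \<open>p \<in> mat_range A\<close>]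
    by (rule pinv_product_on_range)
  have "pinv (Bt ** A) *v (Bt *v (bbar + db))
          = pinv A *v bbar + pinv A *v p + pinv (Bt ** A) *v (transpose E *v r)"
    unfolding Bt_split matrix_vector_right_distrib[of "pinv (Bt ** A)"] on_range
      matrix_vector_right_distrib[of "pinv A"] by (rule refl)
  then have dx: "pinv (Bt ** A) *v (Bt *v (bbar + db)) - pinv A *v bbar
                   = pinv A *v p + pinv (Bt ** A) *v (transpose E *v r)"
    by simp
  have "\<sigma> * norm (pinv A *v p) \<le> norm p"
    using \<open>0 < \<sigma>\<close> A_below by (rule norm_pinv_le)
  then have first: "norm (pinv A *v p) \<le> norm p / \<sigma>"
    using \<open>0 < \<sigma>\<close> by (simp add: field_simps)
  have "ker_perp (Bt ** A) = ker_perp A"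
    unfolding ker_perp_def ker ..
  then have "\<sigma>\<^sup>2 / 2 * norm (pinv (Bt ** A) *v (transpose E *v r)) \<le> norm (transpose E *v r)"
    using \<open>0 < \<sigma>\<^sup>2 / 2\<close> M_below by (intro norm_pinv_le) simp_all
  also have "\<dots> \<le> mat_norm2 E * norm db"
    using norm_transpose_mat_norm2_le[of E r] \<open>norm r \<le> norm db\<close> mat_norm2_nonneg[of E]
    by (meson mult_left_mono order_trans)
  finally have second: "norm (pinv (Bt ** A) *v (transpose E *v r)) \<le> 2 / \<sigma>\<^sup>2 * (mat_norm2 E * norm db)"
    using \<open>0 < \<sigma>\<close> by (simp add: field_simps)
  show ?thesis
    unfolding dx using norm_triangle_ineq first second by (rule order_trans[OF _ add_mono])
qed

lemma perturbed_solution_relative_error: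
  fixes A E :: "real^'n^'m" and bbar db :: "real^'m"
  defines "Bt \<equiv> transpose A + transpose E" and "\<sigma> \<equiv> sigma_min_nz A"
    and "p \<equiv> orth_proj (mat_range A) *v db"
  assumes bbar: "bbar \<in> mat_range A" "bbar \<noteq> 0" and E_small: "mat_norm2 E \<le> \<sigma> / 2"
  shows "norm (pinv (Bt ** A) *v (Bt *v (bbar + db)) - pinv A *v bbar) / norm (pinv A *v bbar)
           \<le> cond2 A * norm p / norm bbar
             + 2 * mat_norm2 A / (\<sigma>\<^sup>2 * norm bbar) * (mat_norm2 E + norm db)\<^sup>2"
proof -
  from bbar obtain u where "A *v u \<noteq> 0"
    unfolding mat_range_def by auto
  then have "0 < \<sigma>"
    unfolding \<sigma>_def by (rule sigma_min_nz_pos)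
  define K where "K = norm p / \<sigma> + 2 / \<sigma>\<^sup>2 * (mat_norm2 E * norm db)"
  have "A *v (pinv A *v bbar) = bbar"
    using bbar(1) unfolding mat_range_def by (auto simp: matrix_pinv_matrix)
  then have "norm bbar \<le> mat_norm2 A * norm (pinv A *v bbar)"
    by (metis norm_mat_norm2_le)
  with bbar(2) have "0 < norm (pinv A *v bbar)"
    by (metis mult_zero_right norm_le_zero_iff norm_zero not_le)
  have "0 \<le> K"
    unfolding K_def using \<open>0 < \<sigma>\<close> mat_norm2_nonneg[of E] by simp
  have "norm (pinv (Bt ** A) *v (Bt *v (bbar + db)) - pinv A *v bbar) / norm (pinv A *v bbar)
          \<le> K / norm (pinv A *v bbar)"
    using perturbed_solution_error[OF bbar E_small[unfolded \<sigma>_def]] \<open>0 < norm (pinv A *v bbar)\<close>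
    unfolding K_def Bt_def p_def \<sigma>_def by (simp add: divide_right_mono)
  also have "\<dots> \<le> K * mat_norm2 A / norm bbar"
    using \<open>norm bbar \<le> mat_norm2 A * norm (pinv A *v bbar)\<close> \<open>0 < norm (pinv A *v bbar)\<close> \<open>0 \<le> K\<close> bbar(2)
    by (simp add: field_simps mult_left_mono)
  also have "\<dots> = cond2 A * norm p / norm bbar
                  + 2 * mat_norm2 A / (\<sigma>\<^sup>2 * norm bbar) * (mat_norm2 E * norm db)"
    using \<open>0 < \<sigma>\<close> bbar(2) unfolding K_def cond2_def \<sigma>_def by (simp add: field_simps)
  also have "\<dots> \<le> cond2 A * norm p / norm bbar
                  + 2 * mat_norm2 A / (\<sigma>\<^sup>2 * norm bbar) * (mat_norm2 E + norm db)\<^sup>2"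
    using \<open>0 < \<sigma>\<close> mat_norm2_nonneg[of A] mat_norm2_nonneg[of E]
    by (intro add_left_mono mult_left_mono) (simp_all add: power2_eq_square algebra_simps)
  finally show ?thesis .
qed

theorem corollary1:
  fixes A :: "real^'n^'m" and bbar :: "real^'m"
  assumes "rank A \<ge> 1"
    and "bbar \<in> mat_range A" and "bbar \<noteq> 0"
  shows "\<exists>C \<epsilon>. \<epsilon> > 0 \<and>
    (\<forall>(E2 :: real^'n^'m) (db :: real^'m).
      let Bt = transpose A + transpose E2;
          b = bbar + db;
          xmin = pinv A *v bbar;
          dx = pinv (Bt ** A) *v (Bt *v b) - xmin
      in (mat_norm2 E2 + norm db < \<epsilon>
          \<and> mat_norm2 (orth_proj (mat_range Bt) - orth_proj (mat_range (transpose A))) < 1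
          \<and> mat_norm2 (orth_proj (mat_range (transpose Bt)) - orth_proj (mat_range A)) < 1)
         \<longrightarrow> norm dx / norm xmin
               \<le> cond2 A * norm (orth_proj (mat_range A) *v db) / norm bbar
                 + C * (mat_norm2 E2 + norm db)\<^sup>2)"
proof -
  from assms(2,3) obtain u where "A *v u \<noteq> 0"
    unfolding mat_range_def by auto
  then have "0 < sigma_min_nz A"
    by (rule sigma_min_nz_pos)
  have E2_small: "mat_norm2 E2 \<le> sigma_min_nz A / 2"
    if "mat_norm2 E2 + norm db < sigma_min_nz A / 2" for E2 :: "real^'n^'m" and db :: "real^'m"
    using that norm_ge_zero[of db] by linarith
  show ?thesis
    unfolding Let_def
    by (rule exI[of _ "2 * mat_norm2 A / ((sigma_min_nz A)\<^sup>2 * norm bbar)"],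
        rule exI[of _ "sigma_min_nz A / 2"])
      (use \<open>0 < sigma_min_nz A\<close> perturbed_solution_relative_error[OF assms(2,3) E2_small] in auto)
qed

end
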